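(* Let $F$ be an infinite field and $R$ a finite-dimensional associative unital $F$-algebra, and let $n$ be the degree of $R$. Then every element $a\in R$ satisfies a (monic) polynomial of degree $n$ over $F$, and there is a nonempty Zariski open subset $U\subseteq R$ such that no element of $U$ satisfies a nonzero polynomial over $F$ of degree $<n$.
   Context: Fix an $F$-basis $a_1,\dots,a_m$ of $R$ and the generic element $x=\sum_i x_ia_i\in R\otimes_F F(x_1,\dots,x_m)$. The degree of $R$ is the degree of the minimal polynomial of $x$ over the field $F(x_1,\dots,x_m)$; equivalently, it is the degree of the minimal Cayley–Hamilton norm of $R$, namely of the polynomial function $(-1)^kP(0)$ where $P$ is that minimal polynomial and $k=\deg P$. Here a Cayley–Hamilton norm is a homogeneous polynomial function $N:R\to F$ which is multiplicative after any base change to a commutative $F$-algebra $B$ and such that every $a\in R\otimes_FB$ satisfies $N_{B[t]}(t-a)$. *)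

theory Defs
  imports "HOL-Computational_Algebra.Polynomial" "HOL-Computational_Algebra.Fraction_Field"
          "HOL-Library.Poly_Mapping"
begin

definition is_algebra :: "('a::field \<Rightarrow> 'r::ring_1 \<Rightarrow> 'r) \<Rightarrow> bool" where
  "is_algebra sc \<longleftrightarrow> vector_space sc \<and>
     (\<forall>c x y. sc c (x * y) = sc c x * y \<and> sc c (x * y) = x * sc c y)"

definition is_basis :: "('a::field \<Rightarrow> 'r::ring_1 \<Rightarrow> 'r) \<Rightarrow> nat \<Rightarrow> (nat \<Rightarrow> 'r) \<Rightarrow> bool" where
  "is_basis sc m b \<longleftrightarrow> inj_on b {..<m} \<and> module.independent sc (b ` {..<m})
      \<and> module.span sc (b ` {..<m}) = UNIV"

definition coord :: "('a::field \<Rightarrow> 'r::ring_1 \<Rightarrow> 'r) \<Rightarrow> nat \<Rightarrow> (nat \<Rightarrow> 'r) \<Rightarrow> 'r \<Rightarrow> nat \<Rightarrow> 'a" where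
  "coord sc m b a i = (if i < m then module.representation sc (b ` {..<m}) a (b i) else 0)"

text \<open>Multivariate polynomials over F in variables indexed by nat, and the rational
  function field F(x_0, x_1, ...), of which only x_0..x_(m-1) are used.\<close>
type_synonym 'a mpoly = "(nat \<Rightarrow>\<^sub>0 nat) \<Rightarrow>\<^sub>0 'a"
type_synonym 'a ratfun = "'a mpoly fract"

definition mpeval :: "'a::comm_ring_1 mpoly \<Rightarrow> (nat \<Rightarrow> 'a) \<Rightarrow> 'a" where
  "mpeval f v = (\<Sum>mono\<in>Poly_Mapping.keys f.
      Poly_Mapping.lookup f mono * (\<Prod>i\<in>Poly_Mapping.keys mono. v i ^ Poly_Mapping.lookup mono i))"

definition const_rf :: "'a::field \<Rightarrow> 'a ratfun" where
  "const_rf c = Fract (Poly_Mapping.single 0 c) 1"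

definition var_rf :: "nat \<Rightarrow> 'a::field ratfun" where
  "var_rf i = Fract (Poly_Mapping.single (Poly_Mapping.single i 1) 1) 1"

text \<open>The scalar extension R \<otimes>_F F(x_1..x_m), written in coordinates w.r.t. the basis
  (elements are coordinate vectors nat \<Rightarrow> K, only indices < m matter).\<close>
definition tmul :: "('a::field \<Rightarrow> 'r::ring_1 \<Rightarrow> 'r) \<Rightarrow> nat \<Rightarrow> (nat \<Rightarrow> 'r)
    \<Rightarrow> (nat \<Rightarrow> 'a ratfun) \<Rightarrow> (nat \<Rightarrow> 'a ratfun) \<Rightarrow> (nat \<Rightarrow> 'a ratfun)" where
  "tmul sc m b u v = (\<lambda>k. \<Sum>i<m. \<Sum>j<m. u i * v j * const_rf (coord sc m b (b i * b j) k))"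

definition tone :: "('a::field \<Rightarrow> 'r::ring_1 \<Rightarrow> 'r) \<Rightarrow> nat \<Rightarrow> (nat \<Rightarrow> 'r) \<Rightarrow> (nat \<Rightarrow> 'a ratfun)" where
  "tone sc m b = (\<lambda>k. const_rf (coord sc m b 1 k))"

fun tpow :: "('a::field \<Rightarrow> 'r::ring_1 \<Rightarrow> 'r) \<Rightarrow> nat \<Rightarrow> (nat \<Rightarrow> 'r)
    \<Rightarrow> (nat \<Rightarrow> 'a ratfun) \<Rightarrow> nat \<Rightarrow> (nat \<Rightarrow> 'a ratfun)" where
  "tpow sc m b u 0 = tone sc m b"
| "tpow sc m b u (Suc d) = tmul sc m b (tpow sc m b u d) u"

definition generic :: "nat \<Rightarrow> (nat \<Rightarrow> 'a::field ratfun)" where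
  "generic m = (\<lambda>i. if i < m then var_rf i else 0)"

definition tannihil :: "('a::field \<Rightarrow> 'r::ring_1 \<Rightarrow> 'r) \<Rightarrow> nat \<Rightarrow> (nat \<Rightarrow> 'r)
    \<Rightarrow> 'a ratfun poly \<Rightarrow> (nat \<Rightarrow> 'a ratfun) \<Rightarrow> bool" where
  "tannihil sc m b p u \<longleftrightarrow>
     (\<forall>k<m. (\<Sum>j\<le>degree p. coeff p j * tpow sc m b u j k) = 0)"

text \<open>Degree of R: degree of the minimal polynomial of the generic element over
  F(x_1,...,x_m), i.e. the least degree of a nonzero polynomial annihilating it.\<close>
definition alg_degree :: "('a::field \<Rightarrow> 'r::ring_1 \<Rightarrow> 'r) \<Rightarrow> nat \<Rightarrow> (nat \<Rightarrow> 'r) \<Rightarrow> nat" where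
  "alg_degree sc m b = (LEAST d. \<exists>p. p \<noteq> 0 \<and> degree p = d \<and> tannihil sc m b p (generic m))"

definition satisfies :: "('a::field \<Rightarrow> 'r::ring_1 \<Rightarrow> 'r) \<Rightarrow> 'r \<Rightarrow> 'a poly \<Rightarrow> bool" where
  "satisfies sc a p \<longleftrightarrow> (\<Sum>j\<le>degree p. sc (coeff p j) (a ^ j)) = 0"

text \<open>Zariski open subsets of R (identified with F^m via the basis coordinates):
  complements of common zero loci of sets of polynomials in the coordinates.\<close>
definition zariski_open :: "('a::field \<Rightarrow> 'r::ring_1 \<Rightarrow> 'r) \<Rightarrow> nat \<Rightarrow> (nat \<Rightarrow> 'r) \<Rightarrow> 'r set \<Rightarrow> bool" where
  "zariski_open sc m b U \<longleftrightarrow>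
     (\<exists>S::'a mpoly set. (\<forall>f\<in>S. \<forall>i\<in>\<Union>(Poly_Mapping.keys ` Poly_Mapping.keys f). i < m) \<and>
        U = {a. \<exists>f\<in>S. mpeval f (coord sc m b a) \<noteq> 0})"

end

theory Submission
  imports Defs "Jordan_Normal_Form.Determinant"
begin

text \<open>
  The coordinates of the powers of the generic element x are polynomials in the variables
  x_1, ..., x_m, and the coordinates of the powers of an element a of R are their values at
  the coordinates of a.  The powers 1, x, ..., x^(k-1) are linearly dependent iff all k-minors
  of their coordinate matrix vanish; these minors are again polynomials in x_1, ..., x_m.
  Since n is the least degree of a polynomial relation between the powers of x, all
  (n+1)-minors vanish identically, hence at every a, so every a satisfies a polynomial of
  degree at most n (which can be made monic of degree exactly n).  Some n-minor D is a nonzero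
  polynomial, so it is nonzero somewhere as F is infinite, and on the open set where D does not
  vanish the powers 1, a, ..., a^(n-1) are independent.
\<close>

section \<open>Evaluation of multivariate polynomials\<close>

definition monomial_value :: "(nat \<Rightarrow> 'a::comm_ring_1) \<Rightarrow> (nat \<Rightarrow>\<^sub>0 nat) \<Rightarrow> 'a" where
  "monomial_value v k = (\<Prod>i\<in>Poly_Mapping.keys k. v i ^ Poly_Mapping.lookup k i)"

lemma monomial_value_eq_prod:
  assumes "finite A" "Poly_Mapping.keys k \<subseteq> A"
  shows "monomial_value v k = (\<Prod>i\<in>A. v i ^ Poly_Mapping.lookup k i)"
  unfolding monomial_value_def
  by (rule prod.mono_neutral_left) (use assms in \<open>auto simp: in_keys_iff\<close>)

lemma keys_add_nat:
  "Poly_Mapping.keys (k + l :: 'b \<Rightarrow>\<^sub>0 nat) = Poly_Mapping.keys k \<union> Poly_Mapping.keys l"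
  by (auto simp: in_keys_iff lookup_add)

lemma monomial_value_0 [simp]: "monomial_value v 0 = 1"
  by (simp add: monomial_value_def)

lemma monomial_value_single [simp]: "monomial_value v (Poly_Mapping.single i e) = v i ^ e"
  by (simp add: monomial_value_def)

lemma monomial_value_add: "monomial_value v (k + l) = monomial_value v k * monomial_value v l"
proof -
  let ?A = "Poly_Mapping.keys k \<union> Poly_Mapping.keys l"
  have "monomial_value v (k + l) = (\<Prod>i\<in>?A. v i ^ Poly_Mapping.lookup (k + l) i)"
    by (rule monomial_value_eq_prod) (auto simp: keys_add_nat)
  also have "\<dots> = (\<Prod>i\<in>?A. v i ^ Poly_Mapping.lookup k i) * (\<Prod>i\<in>?A. v i ^ Poly_Mapping.lookup l i)"
    by (simp add: lookup_add power_add prod.distrib)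
  also have "\<dots> = monomial_value v k * monomial_value v l"
    by (subst (1 2) monomial_value_eq_prod[where A = ?A]) auto
  finally show ?thesis .
qed

lemma mpeval_0 [simp]: "mpeval 0 v = 0"
  by (simp add: mpeval_def)

lemma mpeval_single: "mpeval (Poly_Mapping.single k c) v = c * monomial_value v k"
  by (simp add: mpeval_def monomial_value_def)

lemma mpeval_1 [simp]: "mpeval 1 v = 1"
  using mpeval_single[of 0 1 v] by simp

lemma mpeval_add: "mpeval (f + g) v = mpeval f v + mpeval g v"
  unfolding mpeval_def by (rule setsum_keys_plus_distrib) (simp_all add: distrib_right)

lemma mpeval_sum: "mpeval (sum f I) v = (\<Sum>i\<in>I. mpeval (f i) v)"
  by (induction I rule: infinite_finite_induct) (auto simp: mpeval_add)

lemma sum_single_lookup: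
  "(\<Sum>k\<in>Poly_Mapping.keys f. Poly_Mapping.single k (Poly_Mapping.lookup f k)) = f"
  by (rule poly_mapping_eqI) (simp add: lookup_sum lookup_single when_def in_keys_iff)

lemma mpeval_mult: "mpeval (f * g) v = mpeval f v * mpeval (g :: 'a::comm_ring_1 mpoly) v"
proof -
  have "f * g = (\<Sum>k\<in>Poly_Mapping.keys f. Poly_Mapping.single k (Poly_Mapping.lookup f k)) *
       (\<Sum>l\<in>Poly_Mapping.keys g. Poly_Mapping.single l (Poly_Mapping.lookup g l))"
    by (simp only: sum_single_lookup)
  also have "\<dots> = (\<Sum>k\<in>Poly_Mapping.keys f. \<Sum>l\<in>Poly_Mapping.keys g.
        Poly_Mapping.single (k + l) (Poly_Mapping.lookup f k * Poly_Mapping.lookup g l))"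
    by (simp add: sum_product mult_single)
  finally have "mpeval (f * g) v = (\<Sum>k\<in>Poly_Mapping.keys f. \<Sum>l\<in>Poly_Mapping.keys g.
        Poly_Mapping.lookup f k * Poly_Mapping.lookup g l * monomial_value v (k + l))"
    by (simp add: mpeval_sum mpeval_single)
  also have "\<dots> = (\<Sum>k\<in>Poly_Mapping.keys f. Poly_Mapping.lookup f k * monomial_value v k) *
      (\<Sum>l\<in>Poly_Mapping.keys g. Poly_Mapping.lookup g l * monomial_value v l)"
    by (simp add: sum_product monomial_value_add mult_ac)
  finally show ?thesis by (simp add: mpeval_def monomial_value_def)
qed

lemma comm_ring_hom_mpeval: "comm_ring_hom (\<lambda>f. mpeval f v :: 'a::comm_ring_1)"
  by unfold_locales (simp_all add: mpeval_add mpeval_mult)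

definition vars_below :: "nat \<Rightarrow> 'a::zero mpoly \<Rightarrow> bool" where
  "vars_below N f \<longleftrightarrow> (\<forall>i\<in>\<Union>(Poly_Mapping.keys ` Poly_Mapping.keys f). i < N)"

lemma vars_below_add: "vars_below N f \<Longrightarrow> vars_below N g \<Longrightarrow> vars_below N (f + g)"
  unfolding vars_below_def using keys_add[of f g] by blast

lemma vars_below_mult:
  "vars_below N f \<Longrightarrow> vars_below N g \<Longrightarrow> vars_below N (f * g :: 'a::comm_ring_1 mpoly)"
  unfolding vars_below_def using keys_mult[of f g] by (fastforce simp: keys_add_nat)

lemma vars_below_const: "vars_below N (Poly_Mapping.single 0 c)"
  by (simp add: vars_below_def)

lemma vars_below_monom: "i < N \<Longrightarrow> vars_below N (Poly_Mapping.single (Poly_Mapping.single i e) c)"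
  by (simp add: vars_below_def)

lemma vars_below_of_int: "vars_below N (of_int z :: 'a::comm_ring_1 mpoly)"
  using vars_below_const[of N "of_int z :: 'a"] by simp

lemma vars_below_sum: "(\<And>i. i \<in> I \<Longrightarrow> vars_below N (f i)) \<Longrightarrow> vars_below N (sum f I)"
  by (induction I rule: infinite_finite_induct) (auto intro: vars_below_add simp: vars_below_def[of N 0])

lemma vars_below_prod:
  "(\<And>i. i \<in> I \<Longrightarrow> vars_below N (f i)) \<Longrightarrow> vars_below N (prod f I :: 'a::comm_ring_1 mpoly)"
  by (induction I rule: infinite_finite_induct) (auto intro: vars_below_mult simp: vars_below_def[of N 1])

lemma vars_below_det:
  assumes "\<And>i j. i < n \<Longrightarrow> j < n \<Longrightarrow> vars_below N (f (i, j))"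
  shows "vars_below N (det (mat n n f :: 'a::comm_ring_1 mpoly mat))"
proof -
  have "det (mat n n f) =
      (\<Sum>p \<in> {p. p permutes {0..<n}}. signof p * (\<Prod>i = 0..<n. mat n n f $$ (i, p i)))"
    by (rule det_def') simp
  also have "vars_below N \<dots>"
  proof (intro vars_below_sum vars_below_mult vars_below_of_int vars_below_prod)
    fix p i assume "p \<in> {p. p permutes {0..<n}}" and "i \<in> {0..<n}"
    then show "vars_below N (mat n n f $$ (i, p i))"
      using assms by (simp add: permutes_in_image)
  qed
  finally show ?thesis .
qed

lemma mpeval_cong_vars_below:
  assumes "vars_below N f" "\<And>i. i < N \<Longrightarrow> v i = v' i"
  shows "mpeval f v = mpeval f v'"
  unfolding mpeval_def
proof (intro sum.cong refl arg_cong2[where f = "(*)"] prod.cong)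
  fix k i assume "k \<in> Poly_Mapping.keys f" "i \<in> Poly_Mapping.keys k"
  then show "v i ^ Poly_Mapping.lookup k i = v' i ^ Poly_Mapping.lookup k i"
    using assms unfolding vars_below_def by auto
qed


section \<open>Kronecker substitution\<close>

lemma base_expansion_unique:
  fixes B :: nat
  assumes "\<forall>i<N. a i < B" "\<forall>i<N. b i < B" "(\<Sum>i<N. a i * B ^ i) = (\<Sum>i<N. b i * B ^ i)"
  shows "\<forall>i<N. a i = b i"
  using assms
proof (induction N arbitrary: a b)
  case 0
  then show ?case by simp
next
  case (Suc N)
  have split: "(\<Sum>i<Suc N. c i * B ^ i) = c 0 + B * (\<Sum>i<N. c (Suc i) * B ^ i)" for c
    by (subst sum.lessThan_Suc_shift) (simp add: sum_distrib_left mult_ac)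
  have digit: "a 0 < B" "b 0 < B"
    using Suc.prems(1,2) by auto
  have eq: "a 0 + B * (\<Sum>i<N. a (Suc i) * B ^ i) = b 0 + B * (\<Sum>i<N. b (Suc i) * B ^ i)"
    using Suc.prems(3) by (simp only: split)
  have "a 0 = b 0"
    using arg_cong[OF eq, of "\<lambda>x. x mod B"] digit by simp
  moreover have "\<forall>i<N. a (Suc i) = b (Suc i)"
    using Suc.prems(1,2) eq digit \<open>a 0 = b 0\<close> by (intro Suc.IH) auto
  ultimately show ?case by (auto simp: less_Suc_eq_0_disj)
qed

definition kronecker_weight :: "nat \<Rightarrow> nat \<Rightarrow> (nat \<Rightarrow>\<^sub>0 nat) \<Rightarrow> nat" where
  "kronecker_weight N B k = (\<Sum>i<N. Poly_Mapping.lookup k i * B ^ i)"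

definition kronecker_subst :: "nat \<Rightarrow> nat \<Rightarrow> 'a::comm_ring_1 mpoly \<Rightarrow> 'a poly" where
  "kronecker_subst N B f =
     (\<Sum>k\<in>Poly_Mapping.keys f. monom (Poly_Mapping.lookup f k) (kronecker_weight N B k))"

lemma poly_kronecker_subst:
  assumes "vars_below N f"
  shows "poly (kronecker_subst N B f) t = mpeval f (\<lambda>i. t ^ B ^ i)"
proof -
  have "monomial_value (\<lambda>i. t ^ B ^ i) k = t ^ kronecker_weight N B k"
    if "k \<in> Poly_Mapping.keys f" for k
  proof -
    have "monomial_value (\<lambda>i. t ^ B ^ i) k = (\<Prod>i<N. (t ^ B ^ i) ^ Poly_Mapping.lookup k i)"
      by (rule monomial_value_eq_prod) (use assms that in \<open>auto simp: vars_below_def\<close>)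
    then show ?thesis
      by (simp add: kronecker_weight_def power_sum power_mult[symmetric] mult.commute)
  qed
  then show ?thesis
    unfolding kronecker_subst_def mpeval_def monomial_value_def[symmetric]
    by (simp add: poly_sum poly_monom)
qed

lemma kronecker_subst_nonzero:
  assumes "f \<noteq> 0" "vars_below N f"
    and "\<And>k i. k \<in> Poly_Mapping.keys f \<Longrightarrow> i < N \<Longrightarrow> Poly_Mapping.lookup k i < B"
  shows "kronecker_subst N B f \<noteq> 0"
proof -
  have inj: "inj_on (kronecker_weight N B) (Poly_Mapping.keys f)"
  proof (rule inj_onI)
    fix k l
    assume k: "k \<in> Poly_Mapping.keys f" and l: "l \<in> Poly_Mapping.keys f"
      and "kronecker_weight N B k = kronecker_weight N B l"
    then have "\<forall>i<N. Poly_Mapping.lookup k i = Poly_Mapping.lookup l i"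
      using assms(3) unfolding kronecker_weight_def by (intro base_expansion_unique) auto
    moreover have "i < N" if "i \<in> Poly_Mapping.keys k \<union> Poly_Mapping.keys l" for i
      using assms(2) k l that unfolding vars_below_def by auto
    ultimately show "k = l"
      by (metis UnCI in_keys_iff poly_mapping_eqI)
  qed
  obtain k0 where k0: "k0 \<in> Poly_Mapping.keys f"
    using assms(1) by (metis ex_in_conv keys_eq_empty)
  have "coeff (kronecker_subst N B f) (kronecker_weight N B k0) =
      (\<Sum>k\<in>Poly_Mapping.keys f. if k = k0 then Poly_Mapping.lookup f k else 0)"
    unfolding kronecker_subst_def coeff_sum coeff_monom
    by (intro sum.cong refl) (use inj k0 in \<open>auto dest: inj_onD\<close>)
  also have "\<dots> \<noteq> 0"
    using k0 by (simp add: in_keys_iff)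
  finally show ?thesis by auto
qed

lemma ex_mpeval_nonzero:
  fixes f :: "'a::idom mpoly"
  assumes "infinite (UNIV :: 'a set)" "f \<noteq> 0" "vars_below N f"
  shows "\<exists>v. mpeval f v \<noteq> 0"
proof -
  define B where "B = Suc (\<Sum>k\<in>Poly_Mapping.keys f. \<Sum>i<N. Poly_Mapping.lookup k i)"
  have bound: "Poly_Mapping.lookup k i < B" if "k \<in> Poly_Mapping.keys f" "i < N" for k i
  proof -
    have "Poly_Mapping.lookup k i \<le> (\<Sum>i<N. Poly_Mapping.lookup k i)"
      by (rule member_le_sum) (use that in auto)
    also have "\<dots> \<le> (\<Sum>k\<in>Poly_Mapping.keys f. \<Sum>i<N. Poly_Mapping.lookup k i)"
      by (rule member_le_sum) (use that in auto)
    finally show ?thesis unfolding B_def by simp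
  qed
  have "kronecker_subst N B f \<noteq> 0"
    using assms(2,3) bound by (rule kronecker_subst_nonzero)
  then have "finite {t. poly (kronecker_subst N B f) t = 0}"
    by (rule poly_roots_finite)
  then obtain t where "poly (kronecker_subst N B f) t \<noteq> 0"
    using ex_new_if_finite[OF assms(1)] by blast
  then show ?thesis
    using poly_kronecker_subst[OF assms(3)] by metis
qed


section \<open>Linear dependence and minors\<close>

text \<open>The vectors are w 0, ..., w (k - 1) in F^m, with coordinates w j r for r < m;
  minor w k \<sigma> is taken on the rows \<sigma> 0, ..., \<sigma> (k - 1) of the matrix with these columns.\<close>

definition vecs_dependent :: "nat \<Rightarrow> (nat \<Rightarrow> nat \<Rightarrow> 'f::comm_ring_1) \<Rightarrow> nat \<Rightarrow> bool" where
  "vecs_dependent m w k \<longleftrightarrow> (\<exists>c. (\<exists>j<k. c j \<noteq> 0) \<and> (\<forall>r<m. (\<Sum>j<k. c j * w j r) = 0))"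

definition minor :: "(nat \<Rightarrow> nat \<Rightarrow> 'f::comm_ring_1) \<Rightarrow> nat \<Rightarrow> (nat \<Rightarrow> nat) \<Rightarrow> 'f" where
  "minor w k \<sigma> = det (mat k k (\<lambda>(i, j). w j (\<sigma> i)))"

lemma minor_eq_0_if_dependent:
  fixes w :: "nat \<Rightarrow> nat \<Rightarrow> 'f::idom"
  assumes "vecs_dependent m w k" "\<forall>i<k. \<sigma> i < m"
  shows "minor w k \<sigma> = 0"
proof -
  obtain c where c: "\<exists>j<k. c j \<noteq> 0" "\<forall>r<m. (\<Sum>j<k. c j * w j r) = 0"
    using assms(1) unfolding vecs_dependent_def by blast
  let ?A = "mat k k (\<lambda>(i, j). w j (\<sigma> i))"
  have "vec k c \<noteq> 0\<^sub>v k"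
    using c(1) by (metis index_vec index_zero_vec(1))
  moreover have "?A *\<^sub>v vec k c = 0\<^sub>v k"
  proof (rule eq_vecI)
    fix i assume "i < dim_vec (0\<^sub>v k :: 'f vec)"
    then have "i < k" by simp
    then have "(?A *\<^sub>v vec k c) $ i = (\<Sum>j<k. c j * w j (\<sigma> i))"
      by (simp add: scalar_prod_def atLeast0LessThan mult.commute)
    with \<open>i < k\<close> show "(?A *\<^sub>v vec k c) $ i = 0\<^sub>v k $ i"
      using c(2) assms(2) by simp
  qed simp
  moreover have "?A \<in> carrier_mat k k" "vec k c \<in> carrier_vec k"
    by simp_all
  ultimately show ?thesis
    unfolding minor_def using det_0_iff_vec_prod_zero by blast
qed

lemma vecs_dependent_Suc:
  assumes "vecs_dependent m w k"
  shows "vecs_dependent m w (Suc k)"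
proof -
  obtain c where c: "\<exists>j<k. c j \<noteq> 0" "\<forall>r<m. (\<Sum>j<k. c j * w j r) = 0"
    using assms unfolding vecs_dependent_def by blast
  show ?thesis
    unfolding vecs_dependent_def
  proof (intro exI[of _ "c(k := 0)"] conjI allI impI)
    show "\<exists>j<Suc k. (c(k := 0)) j \<noteq> 0"
      using c(1) by (metis fun_upd_other less_Suc_eq less_irrefl)
    fix r assume "r < m"
    then show "(\<Sum>j<Suc k. (c(k := 0)) j * w j r) = 0"
      using c(2) by simp
  qed
qed

text \<open>Laplace expansion along the last row, which is the only one depending on r.\<close>
lemma minor_Suc_expansion:
  "\<exists>C. C k = minor w k \<sigma> \<and> (\<forall>r. minor w (Suc k) (\<sigma>(k := r)) = (\<Sum>j<Suc k. C j * w j r))"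
proof -
  define M where "M r = mat (Suc k) (Suc k) (\<lambda>(i, j). w j ((\<sigma>(k := r)) i))" for r
  define C where "C j = cofactor (M 0) k j" for j
  have cofactor_M: "cofactor (M r) k j = C j" for r j
  proof -
    have "mat_delete (M r) k j = mat_delete (M 0) k j"
      by (rule eq_matI) (auto simp: mat_delete_def M_def)
    then show ?thesis unfolding C_def cofactor_def by simp
  qed
  have "minor w (Suc k) (\<sigma>(k := r)) = (\<Sum>j<Suc k. C j * w j r)" for r
  proof -
    have "minor w (Suc k) (\<sigma>(k := r)) = (\<Sum>j<Suc k. M r $$ (k, j) * cofactor (M r) k j)"
      unfolding minor_def M_def[symmetric] by (rule laplace_expansion_row) (simp_all add: M_def)
    also have "\<dots> = (\<Sum>j<Suc k. M r $$ (k, j) * C j)"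
      by (simp only: cofactor_M)
    finally show ?thesis
      by (simp add: M_def mult.commute)
  qed
  moreover have "mat_delete (M 0) k k = mat k k (\<lambda>(i, j). w j (\<sigma> i))"
    by (rule eq_matI) (auto simp: mat_delete_def M_def)
  then have "C k = minor w k \<sigma>"
    unfolding C_def cofactor_def minor_def by simp
  ultimately show ?thesis by blast
qed

lemma minor_repeated_row:
  assumes "i < k"
  shows "minor w (Suc k) (\<sigma>(k := \<sigma> i)) = 0"
  unfolding minor_def
  by (rule det_identical_rows[of _ "Suc k" i k]) (use assms in \<open>auto intro!: eq_vecI\<close>)

lemma dependent_if_minors_eq_0:
  assumes "\<And>\<sigma>. \<forall>i<k. \<sigma> i < m \<Longrightarrow> inj_on \<sigma> {..<k} \<Longrightarrow> minor w k \<sigma> = 0"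
  shows "vecs_dependent m w k"
  using assms
proof (induction k)
  case 0
  then show ?case by (simp add: minor_def det_def)
next
  case (Suc k)
  show ?case
  proof (cases "vecs_dependent m w k")
    case True
    then show ?thesis by (rule vecs_dependent_Suc)
  next
    case False
    then obtain \<sigma> where \<sigma>: "\<forall>i<k. \<sigma> i < m" "inj_on \<sigma> {..<k}" "minor w k \<sigma> \<noteq> 0"
      using Suc.IH by blast
    obtain C where C: "C k = minor w k \<sigma>"
      "\<And>r. minor w (Suc k) (\<sigma>(k := r)) = (\<Sum>j<Suc k. C j * w j r)"
      using minor_Suc_expansion by blast
    have "minor w (Suc k) (\<sigma>(k := r)) = 0" if "r < m" for r
    proof (cases "r \<in> \<sigma> ` {..<k}")
      case True
      then show ?thesis using minor_repeated_row by auto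
    next
      case False
      then have "inj_on (\<sigma>(k := r)) {..<Suc k}"
        using \<sigma>(2) by (auto simp: inj_on_def less_Suc_eq)
      moreover have "\<forall>i<Suc k. (\<sigma>(k := r)) i < m"
        using \<sigma>(1) that by (auto simp: less_Suc_eq)
      ultimately show ?thesis using Suc.prems by blast
    qed
    then show ?thesis
      unfolding vecs_dependent_def using C \<sigma>(3) by (intro exI[of _ C]) auto
  qed
qed

lemma vecs_dependent_iff_minors:
  fixes w :: "nat \<Rightarrow> nat \<Rightarrow> 'f::idom"
  shows "vecs_dependent m w k \<longleftrightarrow>
     (\<forall>\<sigma>. (\<forall>i<k. \<sigma> i < m) \<longrightarrow> inj_on \<sigma> {..<k} \<longrightarrow> minor w k \<sigma> = 0)"
  using minor_eq_0_if_dependent dependent_if_minors_eq_0 by blast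

lemma vecs_dependent_beyond_dim: "vecs_dependent m w (Suc m)"
proof (rule dependent_if_minors_eq_0)
  fix \<sigma> assume "\<forall>i<Suc m. \<sigma> i < m" "inj_on \<sigma> {..<Suc m}"
  then have "card {..<Suc m} \<le> card {..<m}"
    by (intro card_inj_on_le) auto
  then show "minor w (Suc m) \<sigma> = 0" by simp
qed

lemma minor_hom:
  assumes "comm_ring_hom h"
  shows "minor (\<lambda>j r. h (w j r)) k \<sigma> = h (minor w k \<sigma>)"
proof -
  have "mat k k (\<lambda>(i, j). h (w j (\<sigma> i))) = map_mat h (mat k k (\<lambda>(i, j). w j (\<sigma> i)))"
    by (rule eq_matI) auto
  then show ?thesis
    unfolding minor_def using comm_ring_hom.hom_det[OF assms] by simp
qed

definition annihilates_vecs :: "nat \<Rightarrow> (nat \<Rightarrow> nat \<Rightarrow> 'f::comm_ring_1) \<Rightarrow> 'f poly \<Rightarrow> bool" where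
  "annihilates_vecs m w p \<longleftrightarrow> (\<forall>r<m. (\<Sum>j\<le>degree p. coeff p j * w j r) = 0)"

lemma sum_le_degree_eq:
  assumes "degree p < N" "\<And>j. g j 0 = 0"
  shows "(\<Sum>j\<le>degree p. g j (coeff p j)) = (\<Sum>j<N. g j (coeff p j))"
  by (rule sum.mono_neutral_left) (use assms in \<open>auto simp: coeff_eq_0\<close>)

lemma vecs_dependent_iff_annihilating_poly:
  "vecs_dependent m w k \<longleftrightarrow> (\<exists>p. p \<noteq> 0 \<and> degree p < k \<and> annihilates_vecs m w p)"
proof
  assume "vecs_dependent m w k"
  then obtain c where c: "\<exists>j<k. c j \<noteq> 0" "\<forall>r<m. (\<Sum>j<k. c j * w j r) = 0"
    unfolding vecs_dependent_def by blast
  define p where "p = (\<Sum>j<k. monom (c j) j)"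
  have coeff_p: "coeff p j = (if j < k then c j else 0)" for j
    unfolding p_def by (simp add: coeff_sum coeff_monom)
  obtain j0 where "j0 < k" "c j0 \<noteq> 0"
    using c(1) by blast
  then have "p \<noteq> 0"
    using coeff_p by (metis coeff_0)
  have "degree p \<le> k - 1"
    by (rule degree_le) (auto simp: coeff_p)
  with \<open>j0 < k\<close> have "degree p < k"
    by linarith
  moreover note \<open>p \<noteq> 0\<close>
  moreover have "annihilates_vecs m w p"
    unfolding annihilates_vecs_def
    using c(2) sum_le_degree_eq[OF \<open>degree p < k\<close>, of "\<lambda>j c. c * w j _"] by (simp add: coeff_p)
  ultimately show "\<exists>p. p \<noteq> 0 \<and> degree p < k \<and> annihilates_vecs m w p" by blast
next
  assume "\<exists>p. p \<noteq> 0 \<and> degree p < k \<and> annihilates_vecs m w p"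
  then obtain p where p: "p \<noteq> 0" "degree p < k" "annihilates_vecs m w p" by blast
  show "vecs_dependent m w k"
    unfolding vecs_dependent_def
  proof (intro exI[of _ "coeff p"] conjI allI impI)
    show "\<exists>j<k. coeff p j \<noteq> 0"
      using p(1,2) by (intro exI[of _ "degree p"]) simp
    fix r assume "r < m"
    then show "(\<Sum>j<k. coeff p j * w j r) = 0"
      using p(3) sum_le_degree_eq[OF p(2), of "\<lambda>j c. c * w j r"]
      unfolding annihilates_vecs_def by simp
  qed
qed


locale based_algebra =
  fixes sc :: "'a::field \<Rightarrow> 'r::ring_1 \<Rightarrow> 'r" and m :: nat and b :: "nat \<Rightarrow> 'r"
  assumes is_algebra: "is_algebra sc" and is_basis: "is_basis sc m b"
begin

sublocale V: vector_space sc
  using is_algebra unfolding is_algebra_def by blast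

lemma scale_mult_left: "sc c (x * y) = sc c x * y"
  using is_algebra unfolding is_algebra_def by blast

lemma scale_mult_right: "sc c (x * y) = x * sc c y"
  using is_algebra unfolding is_algebra_def by blast

lemma independent_basis: "V.independent (b ` {..<m})"
  using is_basis unfolding is_basis_def by blast

lemma in_span_basis: "x \<in> V.span (b ` {..<m})"
  using is_basis unfolding is_basis_def by blast

lemma inj_on_basis: "inj_on b {..<m}"
  using is_basis unfolding is_basis_def by blast

lemma sum_coord_scale_basis: "(\<Sum>i<m. sc (coord sc m b x i) (b i)) = x"
proof -
  have "(\<Sum>i<m. sc (coord sc m b x i) (b i)) =
      (\<Sum>i<m. sc (V.representation (b ` {..<m}) x (b i)) (b i))"
    by (simp add: coord_def)
  also have "\<dots> = (\<Sum>v\<in>b ` {..<m}. sc (V.representation (b ` {..<m}) x v) v)"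
    by (rule sum.reindex[OF inj_on_basis, unfolded comp_def, symmetric])
  also have "\<dots> = x"
    by (rule V.sum_representation_eq[OF independent_basis in_span_basis]) auto
  finally show ?thesis .
qed

lemma coord_add: "coord sc m b (x + y) i = coord sc m b x i + coord sc m b y i"
  by (simp add: coord_def V.representation_add[OF independent_basis in_span_basis in_span_basis])

lemma coord_scale: "coord sc m b (sc c x) i = c * coord sc m b x i"
  by (simp add: coord_def V.representation_scale[OF independent_basis in_span_basis])

lemma coord_0: "coord sc m b 0 i = 0"
  by (simp add: coord_def V.representation_zero)

lemma coord_sum: "coord sc m b (sum f J) i = (\<Sum>j\<in>J. coord sc m b (f j) i)"
  by (induction J rule: infinite_finite_induct) (auto simp: coord_0 coord_add)

lemma coord_basis: "j < m \<Longrightarrow> coord sc m b (b j) i = (if i = j then 1 else 0)"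
  using inj_on_basis
  by (auto simp: coord_def V.representation_basis[OF independent_basis] inj_on_def)

lemma coord_lincomb: "coord sc m b (\<Sum>j<m. sc (c j) (b j)) i = (if i < m then c i else 0)"
  by (simp add: coord_sum coord_scale coord_basis if_distrib[of "\<lambda>x. _ * x"] sum.delta' cong: if_cong)

lemma eq_0_iff_coord_eq_0: "x = 0 \<longleftrightarrow> (\<forall>i<m. coord sc m b x i = 0)"
  using sum_coord_scale_basis[of x] by (auto simp: coord_0)

lemma coord_mult:
  "coord sc m b (x * y) k =
     (\<Sum>i<m. \<Sum>l<m. coord sc m b x i * coord sc m b y l * coord sc m b (b i * b l) k)"
proof -
  have "x * y = (\<Sum>i<m. sc (coord sc m b x i) (b i)) * (\<Sum>l<m. sc (coord sc m b y l) (b l))"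
    by (simp only: sum_coord_scale_basis)
  also have "\<dots> = (\<Sum>i<m. \<Sum>l<m. sc (coord sc m b x i * coord sc m b y l) (b i * b l))"
    unfolding sum_product
    by (intro sum.cong refl) (simp add: scale_mult_left[symmetric] scale_mult_right[symmetric])
  finally show ?thesis
    by (simp add: coord_sum coord_scale)
qed

lemma satisfies_iff_annihilates_powers:
  "satisfies sc a p \<longleftrightarrow> annihilates_vecs m (\<lambda>j. coord sc m b (a ^ j)) p"
proof -
  have "satisfies sc a p \<longleftrightarrow>
      (\<forall>r<m. coord sc m b (\<Sum>j\<le>degree p. sc (coeff p j) (a ^ j)) r = 0)"
    unfolding satisfies_def by (rule eq_0_iff_coord_eq_0)
  then show ?thesis
    by (simp add: annihilates_vecs_def coord_sum coord_scale)
qed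

lemma sum_powers_monom_mult:
  "(\<Sum>j<N + e. sc (coeff (monom c e * p) j) (a ^ j)) = sc c ((\<Sum>j<N. sc (coeff p j) (a ^ j)) * a ^ e)"
proof (induction N)
  case 0
  then show ?case by (simp add: coeff_monom_mult)
next
  case (Suc N)
  then show ?case
    by (simp add: coeff_monom_mult power_add scale_mult_left distrib_right V.scale_right_distrib)
qed

lemma satisfies_monom_mult:
  assumes "satisfies sc a p"
  shows "satisfies sc a (monom c e * p)"
proof -
  define N where "N = Suc (degree p)"
  have "degree (monom c e * p) < N + e"
    using degree_mult_le[of "monom c e" p] degree_monom_le[of c e] unfolding N_def by linarith
  then have "satisfies sc a (monom c e * p) \<longleftrightarrow>
      (\<Sum>j<N + e. sc (coeff (monom c e * p) j) (a ^ j)) = 0"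
    unfolding satisfies_def by (subst sum_le_degree_eq) auto
  moreover have "(\<Sum>j<N. sc (coeff p j) (a ^ j)) = 0"
    using assms unfolding satisfies_def N_def by (subst (asm) sum_le_degree_eq) auto
  ultimately show ?thesis
    by (simp add: sum_powers_monom_mult)
qed

lemma ex_monic_satisfied_of_degree:
  assumes "p \<noteq> 0" "degree p \<le> n" "satisfies sc a p"
  shows "\<exists>q. lead_coeff q = 1 \<and> degree q = n \<and> satisfies sc a q"
proof -
  let ?q = "monom (inverse (lead_coeff p)) (n - degree p) * p"
  have "lead_coeff ?q = 1"
    using assms(1) by (simp only: lead_coeff_mult lead_coeff_monom) simp
  moreover have "degree ?q = n"
    using assms(1,2) by (simp add: degree_mult_eq degree_monom_eq)
  moreover have "satisfies sc a ?q"
    using assms(3) by (rule satisfies_monom_mult)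
  ultimately show ?thesis by blast
qed

end


section \<open>Coordinates of the powers of the generic element\<close>

abbreviation mpvar :: "nat \<Rightarrow> 'a::comm_ring_1 mpoly" where
  "mpvar i \<equiv> Poly_Mapping.single (Poly_Mapping.single i 1) 1"

abbreviation mpconst :: "'a::comm_ring_1 \<Rightarrow> 'a mpoly" where
  "mpconst c \<equiv> Poly_Mapping.single 0 c"

primrec power_coord_poly ::
    "('a::field \<Rightarrow> 'r::ring_1 \<Rightarrow> 'r) \<Rightarrow> nat \<Rightarrow> (nat \<Rightarrow> 'r) \<Rightarrow> nat \<Rightarrow> nat \<Rightarrow> 'a mpoly" where
  "power_coord_poly sc m b 0 k = mpconst (coord sc m b 1 k)"
| "power_coord_poly sc m b (Suc j) k =
     (\<Sum>i<m. \<Sum>l<m. power_coord_poly sc m b j i * mpvar l * mpconst (coord sc m b (b i * b l) k))"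

lemma comm_ring_hom_to_fract: "comm_ring_hom to_fract"
  by unfold_locales simp_all

lemma tpow_generic_eq: "tpow sc m b (generic m) j k = to_fract (power_coord_poly sc m b j k)"
proof (induction j arbitrary: k)
  case 0
  then show ?case by (simp add: tone_def const_rf_def to_fract_def)
next
  case (Suc j)
  interpret comm_ring_hom to_fract by (rule comm_ring_hom_to_fract)
  have "tpow sc m b (generic m) (Suc j) k =
      (\<Sum>i<m. \<Sum>l<m. to_fract (power_coord_poly sc m b j i) * to_fract (mpvar l) *
        to_fract (mpconst (coord sc m b (b i * b l) k)))"
    unfolding tpow.simps tmul_def Suc.IH
    by (intro sum.cong refl) (simp add: generic_def var_rf_def const_rf_def to_fract_def)
  also have "\<dots> = to_fract (power_coord_poly sc m b (Suc j) k)"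
    by (simp add: hom_sum)
  finally show ?case .
qed

lemma vars_below_power_coord_poly: "vars_below m (power_coord_poly sc m b j k)"
  by (induction j arbitrary: k)
     (auto intro!: vars_below_sum vars_below_mult vars_below_monom vars_below_const)

lemma minor_generic_powers:
  "minor (tpow sc m b (generic m)) k \<sigma> = to_fract (minor (power_coord_poly sc m b) k \<sigma>)"
proof -
  have "tpow sc m b (generic m) = (\<lambda>j r. to_fract (power_coord_poly sc m b j r))"
    by (simp add: fun_eq_iff tpow_generic_eq)
  then show ?thesis
    using minor_hom[OF comm_ring_hom_to_fract] by simp
qed

lemma dependent_generic_powers_iff:
  "vecs_dependent m (tpow sc m b (generic m)) k \<longleftrightarrow> alg_degree sc m b < k"
proof -
  let ?W = "tpow sc m b (generic m)"
  have alg_degree_eq: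
    "alg_degree sc m b = (LEAST d. \<exists>p. p \<noteq> 0 \<and> degree p = d \<and> annihilates_vecs m ?W p)"
    by (simp add: alg_degree_def tannihil_def annihilates_vecs_def)
  have alg_degree_le: "alg_degree sc m b \<le> degree p" if "p \<noteq> 0" "annihilates_vecs m ?W p" for p
    unfolding alg_degree_eq by (rule Least_le) (use that in blast)
  have "\<exists>d p. p \<noteq> 0 \<and> degree p = d \<and> annihilates_vecs m ?W p"
    using vecs_dependent_beyond_dim[of m ?W] unfolding vecs_dependent_iff_annihilating_poly by blast
  from LeastI_ex[OF this] obtain p
    where p: "p \<noteq> 0" "degree p = alg_degree sc m b" "annihilates_vecs m ?W p"
    unfolding alg_degree_eq by blast
  show ?thesis
  proof
    assume "vecs_dependent m ?W k"
    then obtain q where q: "q \<noteq> 0" "degree q < k" "annihilates_vecs m ?W q"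
      by (auto simp: vecs_dependent_iff_annihilating_poly)
    show "alg_degree sc m b < k"
      using alg_degree_le[OF q(1,3)] q(2) by linarith
  next
    assume "alg_degree sc m b < k"
    with p show "vecs_dependent m ?W k"
      by (auto simp: vecs_dependent_iff_annihilating_poly)
  qed
qed

lemma zariski_open_nonvanishing:
  assumes "vars_below m D"
  shows "zariski_open sc m b {a. mpeval D (coord sc m b a) \<noteq> 0}"
  unfolding zariski_open_def
  using assms unfolding vars_below_def by (intro exI[of _ "{D}"]) auto

context based_algebra
begin

lemma mpeval_power_coord_poly:
  "mpeval (power_coord_poly sc m b j k) (coord sc m b a) = coord sc m b (a ^ j) k"
proof (induction j arbitrary: k)
  case 0
  then show ?case by (simp add: mpeval_single)
next
  case (Suc j)
  have "mpeval (power_coord_poly sc m b (Suc j) k) (coord sc m b a) =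
      (\<Sum>i<m. \<Sum>l<m. coord sc m b (a ^ j) i * coord sc m b a l * coord sc m b (b i * b l) k)"
    by (simp add: mpeval_sum mpeval_mult mpeval_single Suc.IH)
  also have "\<dots> = coord sc m b (a ^ Suc j) k"
    by (simp only: power_Suc2 coord_mult[of "a ^ j" a])
  finally show ?case .
qed

lemma minor_powers:
  "minor (\<lambda>j. coord sc m b (a ^ j)) k \<sigma> =
     mpeval (minor (power_coord_poly sc m b) k \<sigma>) (coord sc m b a)"
proof -
  have "(\<lambda>j. coord sc m b (a ^ j)) = (\<lambda>j r. mpeval (power_coord_poly sc m b j r) (coord sc m b a))"
    by (simp add: fun_eq_iff mpeval_power_coord_poly)
  then show ?thesis
    using minor_hom[OF comm_ring_hom_mpeval] by simp
qed

lemma ex_mpeval_coord_nonzero: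
  assumes "infinite (UNIV :: 'a set)" "D \<noteq> 0" "vars_below m D"
  shows "\<exists>a. mpeval D (coord sc m b a) \<noteq> 0"
proof -
  obtain v where "mpeval D v \<noteq> 0"
    using ex_mpeval_nonzero assms by blast
  moreover have "mpeval D (coord sc m b (\<Sum>i<m. sc (v i) (b i))) = mpeval D v"
    by (rule mpeval_cong_vars_below[OF assms(3)]) (simp add: coord_lincomb)
  ultimately show ?thesis
    by (intro exI[of _ "\<Sum>i<m. sc (v i) (b i)"]) simp
qed

lemma ex_monic_satisfied:
  "\<exists>p. lead_coeff p = 1 \<and> degree p = alg_degree sc m b \<and> satisfies sc a p"
proof -
  let ?n = "alg_degree sc m b"
  have "minor (\<lambda>j. coord sc m b (a ^ j)) (Suc ?n) \<sigma> = 0"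
    if "\<forall>i<Suc ?n. \<sigma> i < m" "inj_on \<sigma> {..<Suc ?n}" for \<sigma>
  proof -
    have "vecs_dependent m (tpow sc m b (generic m)) (Suc ?n)"
      by (simp add: dependent_generic_powers_iff)
    then have "minor (tpow sc m b (generic m)) (Suc ?n) \<sigma> = 0"
      using that(1) by (rule minor_eq_0_if_dependent)
    then show ?thesis
      by (simp add: minor_generic_powers minor_powers)
  qed
  then have "vecs_dependent m (\<lambda>j. coord sc m b (a ^ j)) (Suc ?n)"
    by (simp add: vecs_dependent_iff_minors)
  then obtain p where "p \<noteq> 0" "degree p \<le> ?n" "satisfies sc a p"
    by (auto simp: vecs_dependent_iff_annihilating_poly satisfies_iff_annihilates_powers)
  then show ?thesis
    by (rule ex_monic_satisfied_of_degree)
qed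

lemma ex_zariski_open_no_lower_degree:
  assumes "infinite (UNIV :: 'a set)"
  shows "\<exists>U. zariski_open sc m b U \<and> U \<noteq> {} \<and>
    (\<forall>a\<in>U. \<forall>p::'a poly. p \<noteq> 0 \<and> degree p < alg_degree sc m b \<longrightarrow> \<not> satisfies sc a p)"
proof -
  let ?n = "alg_degree sc m b"
  have "\<not> vecs_dependent m (tpow sc m b (generic m)) ?n"
    by (simp add: dependent_generic_powers_iff)
  then obtain \<sigma> where \<sigma>: "\<forall>i<?n. \<sigma> i < m" "minor (tpow sc m b (generic m)) ?n \<sigma> \<noteq> 0"
    unfolding vecs_dependent_iff_minors by blast
  define D where "D = minor (power_coord_poly sc m b) ?n \<sigma>"
  define U where "U = {a. mpeval D (coord sc m b a) \<noteq> 0}"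
  have "D \<noteq> 0"
    using \<sigma>(2) by (simp add: D_def minor_generic_powers)
  have "vars_below m D"
    unfolding D_def minor_def by (rule vars_below_det) (simp add: vars_below_power_coord_poly)
  have "\<not> satisfies sc a p" if "a \<in> U" "p \<noteq> 0" "degree p < ?n" for a p
  proof
    assume "satisfies sc a p"
    with that(2,3) have "vecs_dependent m (\<lambda>j. coord sc m b (a ^ j)) ?n"
      by (auto simp: vecs_dependent_iff_annihilating_poly satisfies_iff_annihilates_powers)
    then have "minor (\<lambda>j. coord sc m b (a ^ j)) ?n \<sigma> = 0"
      using \<sigma>(1) by (rule minor_eq_0_if_dependent)
    with \<open>a \<in> U\<close> show False
      by (simp add: U_def D_def minor_powers)
  qed
  moreover have "zariski_open sc m b U"
    unfolding U_def using \<open>vars_below m D\<close> by (rule zariski_open_nonvanishing)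
  moreover have "U \<noteq> {}"
    unfolding U_def using ex_mpeval_coord_nonzero[OF assms \<open>D \<noteq> 0\<close> \<open>vars_below m D\<close>] by blast
  ultimately show ?thesis by blast
qed

end

theorem proposition2p9:
  fixes sc :: "'a::field \<Rightarrow> 'r::ring_1 \<Rightarrow> 'r" and m :: nat and b :: "nat \<Rightarrow> 'r"
  assumes "infinite (UNIV :: 'a set)"
    and "is_algebra sc"
    and "is_basis sc m b"
    and "n = alg_degree sc m b"
  shows "(\<forall>a. \<exists>p::'a poly. lead_coeff p = 1 \<and> degree p = n \<and> satisfies sc a p)
    \<and> (\<exists>U. zariski_open sc m b U \<and> U \<noteq> {} \<and>
          (\<forall>a\<in>U. \<forall>p::'a poly. p \<noteq> 0 \<and> degree p < n \<longrightarrow> \<not> satisfies sc a p))"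
proof -
  interpret based_algebra sc m b
    using assms(2,3) by unfold_locales
  show ?thesis
    using ex_monic_satisfied ex_zariski_open_no_lower_degree[OF assms(1)] assms(4) by blast
qed

end
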